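(* Let $M$ and $M'$ be two stable matchings in an instance $I$ of SPA-S. If some student $s_i$ is assigned in $M$ and in $M'$ to different projects offered by the same lecturer $l_k$, and $s_i$ prefers $M$ to $M'$, then $l_k$ prefers $s_i$ to some student $s_z\in M(l_k)\setminus M'(l_k)$.
   Context: An instance $I$ of SPA-S consists of a finite set $\mathcal{S}$ of students, a finite set $\mathcal{P}$ of projects and a finite set $\mathcal{L}$ of lecturers. Each student $s_i$ ranks a subset $A_i\subseteq\mathcal{P}$ (its acceptable projects) in strict order. Each project is offered by exactly one lecturer; lecturer $l_k$ offers a nonempty set $P_k\subseteq\mathcal{P}$, the $P_k$ partitioning $\mathcal{P}$. Each lecturer $l_k$ ranks in strict order the students who find at least one project of $P_k$ acceptable. Projects have capacities $c_j\in\mathbb{Z}^+$, lecturers have capacities $d_k\in\mathbb{Z}^+$ with $\max\{c_j:p_j\in P_k\}\le d_k\le\sum\{c_j:p_j\in P_k\}$. A pair $(s_i,p_j)$, $p_j$ offered by $l_k$, is acceptable if $p_j\in A_i$ and $s_i$ is on $l_k$'s list. A matching $M$ is a set of acceptable pairs with each student in at most one pair, $|M(p_j)|\le c_j$, $|M(l_k)|\le d_k$, where $M(s_i)$, $M(p_j)$, $M(l_k)$ denote the project of $s_i$, the students assigned to $p_j$, and the students assigned to projects of $l_k$. Undersubscribed/full means fewer than/exactly capacity many assigned students. An acceptable pair $(s_i,p_j)\notin M$ ($p_j$ offered by $l_k$) blocks $M$ if ($s_i$ is unassigned or prefers $p_j$ to $M(s_i)$) and one of: (P1) $p_j$ and $l_k$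 undersubscribed; (P2) $p_j$ undersubscribed, $l_k$ full, $s_i\in M(l_k)$; (P3) $p_j$ undersubscribed, $l_k$ full, $l_k$ prefers $s_i$ to the worst student of $M(l_k)$; (P4) $p_j$ full and $l_k$ prefers $s_i$ to the worst student of $M(p_j)$. $M$ is stable if it has no blocking pair. A student $s$ prefers $M$ to $M'$ if $s$ is assigned in both and prefers $M(s)$ to $M'(s)$. *)

theory Defs
  imports Main
begin

text \<open>Parameters:
  S (students), P (projects), L (lecturers),
  A s (acceptable projects of student s),
  SP s (strict preference of s over projects: (p,q) \<in> SP s means s prefers p to q),
  lec p (the lecturer offering p),
  LP l (strict preference of lecturer l over students: (x,y) \<in> LP l means l prefers x to y),
  cp p (project capacity), dl l (lecturer capacity).\<close>

definition offers :: "'p set \<Rightarrow> ('p \<Rightarrow> 'l) \<Rightarrow> 'l \<Rightarrow> 'p set" where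
  "offers P lec l = {p \<in> P. lec p = l}"

definition lec_list :: "'s set \<Rightarrow> ('s \<Rightarrow> 'p set) \<Rightarrow> ('p \<Rightarrow> 'l) \<Rightarrow> 'l \<Rightarrow> 's set" where
  "lec_list S A lec l = {s \<in> S. \<exists>p \<in> A s. lec p = l}"

definition spa_instance ::
  "'s set \<Rightarrow> 'p set \<Rightarrow> 'l set \<Rightarrow> ('s \<Rightarrow> 'p set) \<Rightarrow> ('s \<Rightarrow> ('p \<times> 'p) set)
   \<Rightarrow> ('p \<Rightarrow> 'l) \<Rightarrow> ('l \<Rightarrow> ('s \<times> 's) set) \<Rightarrow> ('p \<Rightarrow> nat) \<Rightarrow> ('l \<Rightarrow> nat) \<Rightarrow> bool" where
  "spa_instance S P L A SP lec LP cp dl \<longleftrightarrow>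
     finite S \<and> finite P \<and> finite L \<and>
     (\<forall>s \<in> S. A s \<subseteq> P \<and> SP s \<subseteq> A s \<times> A s \<and> strict_linear_order_on (A s) (SP s)) \<and>
     (\<forall>p \<in> P. lec p \<in> L) \<and>
     (\<forall>l \<in> L. offers P lec l \<noteq> {}) \<and>
     (\<forall>l \<in> L. LP l \<subseteq> lec_list S A lec l \<times> lec_list S A lec l \<and>
              strict_linear_order_on (lec_list S A lec l) (LP l)) \<and>
     (\<forall>p \<in> P. cp p > 0) \<and>
     (\<forall>l \<in> L. dl l > 0 \<and> Max (cp ` offers P lec l) \<le> dl l \<and>
              dl l \<le> (\<Sum>p \<in> offers P lec l. cp p))"

definition acceptable_pair :: "'s set \<Rightarrow> ('s \<Rightarrow> 'p set) \<Rightarrow> ('p \<Rightarrow> 'l) \<Rightarrow> 's \<Rightarrow> 'p \<Rightarrow> bool" where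
  "acceptable_pair S A lec s p \<longleftrightarrow> s \<in> S \<and> p \<in> A s \<and> s \<in> lec_list S A lec (lec p)"

definition Mproj :: "('s \<times> 'p) set \<Rightarrow> 'p \<Rightarrow> 's set" where
  "Mproj M p = {s. (s, p) \<in> M}"

definition Mlec :: "('s \<times> 'p) set \<Rightarrow> ('p \<Rightarrow> 'l) \<Rightarrow> 'l \<Rightarrow> 's set" where
  "Mlec M lec l = {s. \<exists>p. (s, p) \<in> M \<and> lec p = l}"

definition assigned :: "('s \<times> 'p) set \<Rightarrow> 's \<Rightarrow> bool" where
  "assigned M s \<longleftrightarrow> (\<exists>p. (s, p) \<in> M)"

definition is_matching ::
  "'s set \<Rightarrow> ('s \<Rightarrow> 'p set) \<Rightarrow> ('p \<Rightarrow> 'l) \<Rightarrow> ('p \<Rightarrow> nat) \<Rightarrow> ('l \<Rightarrow> nat)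
   \<Rightarrow> ('s \<times> 'p) set \<Rightarrow> bool" where
  "is_matching S A lec cp dl M \<longleftrightarrow>
     (\<forall>(s, p) \<in> M. acceptable_pair S A lec s p) \<and>
     (\<forall>s p q. (s, p) \<in> M \<longrightarrow> (s, q) \<in> M \<longrightarrow> p = q) \<and>
     (\<forall>p. card (Mproj M p) \<le> cp p) \<and>
     (\<forall>l. card (Mlec M lec l) \<le> dl l)"

definition prefers_to_worst :: "('s \<times> 's) set \<Rightarrow> 's \<Rightarrow> 's set \<Rightarrow> bool" where
  "prefers_to_worst R x T \<longleftrightarrow>
     (\<exists>w \<in> T. (\<forall>y \<in> T. y \<noteq> w \<longrightarrow> (y, w) \<in> R) \<and> (x, w) \<in> R)"

definition blocking_pair ::
  "'s set \<Rightarrow> ('s \<Rightarrow> 'p set) \<Rightarrow> ('s \<Rightarrow> ('p \<times> 'p) set) \<Rightarrow> ('p \<Rightarrow> 'l)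
   \<Rightarrow> ('l \<Rightarrow> ('s \<times> 's) set) \<Rightarrow> ('p \<Rightarrow> nat) \<Rightarrow> ('l \<Rightarrow> nat)
   \<Rightarrow> ('s \<times> 'p) set \<Rightarrow> 's \<Rightarrow> 'p \<Rightarrow> bool" where
  "blocking_pair S A SP lec LP cp dl M s p \<longleftrightarrow>
     acceptable_pair S A lec s p \<and> (s, p) \<notin> M \<and>
     (\<not> assigned M s \<or> (\<exists>q. (s, q) \<in> M \<and> (p, q) \<in> SP s)) \<and>
     (  (card (Mproj M p) < cp p \<and> card (Mlec M lec (lec p)) < dl (lec p))
      \<or> (card (Mproj M p) < cp p \<and> card (Mlec M lec (lec p)) = dl (lec p)
           \<and> s \<in> Mlec M lec (lec p))
      \<or> (card (Mproj M p) < cp p \<and> card (Mlec M lec (lec p)) = dl (lec p)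
           \<and> prefers_to_worst (LP (lec p)) s (Mlec M lec (lec p)))
      \<or> (card (Mproj M p) = cp p \<and> prefers_to_worst (LP (lec p)) s (Mproj M p)))"

definition spa_stable ::
  "'s set \<Rightarrow> ('s \<Rightarrow> 'p set) \<Rightarrow> ('s \<Rightarrow> ('p \<times> 'p) set) \<Rightarrow> ('p \<Rightarrow> 'l)
   \<Rightarrow> ('l \<Rightarrow> ('s \<times> 's) set) \<Rightarrow> ('p \<Rightarrow> nat) \<Rightarrow> ('l \<Rightarrow> nat)
   \<Rightarrow> ('s \<times> 'p) set \<Rightarrow> bool" where
  "spa_stable S A SP lec LP cp dl M \<longleftrightarrow>
     is_matching S A lec cp dl M \<and>
     (\<forall>s p. \<not> blocking_pair S A SP lec LP cp dl M s p)"

definition student_prefers :: "('s \<Rightarrow> ('p \<times> 'p) set) \<Rightarrow> 's \<Rightarrow> ('s \<times> 'p) set \<Rightarrow> ('s \<times> 'p) set \<Rightarrow> bool" where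
  "student_prefers SP s M M' \<longleftrightarrow> (\<exists>p q. (s, p) \<in> M \<and> (s, q) \<in> M' \<and> (p, q) \<in> SP s)"

end

theory Submission
  imports Defs
begin

(* A student who is better off in M than in M' arrives
   at the project M gives them, and a student who prefers M departs from the project M' gives
   them; the balance of a project is its number of arrivals minus its number of departures.
   Every departing student arrives somewhere else, so the balances of all projects sum to at
   least 0. Conversely, if a lecturer's projects had positive total balance, the lecturer would
   be full in M' with a student of M ranked below all of M', and by symmetry the same would
   happen with M and M' exchanged; since the total changes only by the difference of the
   lecturer's loads, every lecturer's total balance is at most 0, hence exactly 0.
   Now suppose l ranks every student of M(l) - M'(l) above s. Stability of M' forces every
   project of l with an arrival to be full in M' with all its M'-students ranked above its
   arrivals; stability of M then bounds its arrivals by its departures, so all balances at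
   projects of l vanish. The arrival at a project of l that l ranks lowest either lies in
   M(l) - M'(l), hence above the arrival s, or departs from a project of l, which then has an
   arrival ranked below it. *)

lemma strict_linear_order_on_asym:
  assumes "strict_linear_order_on C R" "(x, y) \<in> R"
  shows "(y, x) \<notin> R"
  using assms by (metis strict_linear_order_on_def irrefl_def transD)

lemma strict_linear_order_on_trans:
  assumes "strict_linear_order_on C R" "(x, y) \<in> R" "(y, z) \<in> R"
  shows "(x, z) \<in> R"
  using assms by (metis strict_linear_order_on_def transD)

lemma strict_linear_order_on_total:
  assumes "strict_linear_order_on C R" "x \<in> C" "y \<in> C" "x \<noteq> y" "(x, y) \<notin> R"
  shows "(y, x) \<in> R"
  using assms by (auto simp: strict_linear_order_on_def total_on_def)

lemma strict_linear_order_on_worst: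
  assumes ord: "strict_linear_order_on C R" and "finite T" "T \<noteq> {}" "T \<subseteq> C"
  obtains w where "w \<in> T" "\<And>y. y \<in> T \<Longrightarrow> y \<noteq> w \<Longrightarrow> (y, w) \<in> R"
proof -
  from assms(2-4) have "\<exists>w\<in>T. \<forall>y\<in>T. y \<noteq> w \<longrightarrow> (y, w) \<in> R"
  proof (induction T rule: finite_ne_induct)
    case (insert a F)
    then obtain w where w: "w \<in> F" "\<forall>y\<in>F. y \<noteq> w \<longrightarrow> (y, w) \<in> R" by auto
    have "a \<noteq> w" using insert w by auto
    then consider "(a, w) \<in> R" | "(w, a) \<in> R"
      using strict_linear_order_on_total[OF ord] insert w by blast
    then show ?case
    proof cases
      case 2
      then have "\<forall>y\<in>insert a F. y \<noteq> a \<longrightarrow> (y, a) \<in> R"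
        using w strict_linear_order_on_trans[OF ord] by auto
      then show ?thesis by blast
    qed (use w in auto)
  qed auto
  then show thesis using that by blast
qed

lemma prefers_to_worst_iff:
  assumes ord: "strict_linear_order_on C R" and "finite T" "T \<subseteq> C"
  shows "prefers_to_worst R x T \<longleftrightarrow> (\<exists>y\<in>T. (x, y) \<in> R)"
proof
  assume "\<exists>y\<in>T. (x, y) \<in> R"
  then obtain y where y: "y \<in> T" "(x, y) \<in> R" by blast
  obtain w where w: "w \<in> T" "\<And>z. z \<in> T \<Longrightarrow> z \<noteq> w \<Longrightarrow> (z, w) \<in> R"
    using strict_linear_order_on_worst[OF ord assms(2) _ assms(3)] y(1) by blast
  have "(x, w) \<in> R"
    using y w strict_linear_order_on_trans[OF ord] by (cases "y = w") auto
  then show "prefers_to_worst R x T" using w unfolding prefers_to_worst_def by blast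
qed (auto simp: prefers_to_worst_def)

lemma outranked_if_not_prefers_to_worst:
  assumes ord: "strict_linear_order_on C R" and "finite T" "T \<subseteq> C"
    and "\<not> prefers_to_worst R x T" "x \<in> C" "x \<notin> T" "y \<in> T"
  shows "(y, x) \<in> R"
  using assms prefers_to_worst_iff[OF ord assms(2,3)]
  by (metis strict_linear_order_on_total subsetD)

lemma int_card_diff_eq:
  assumes "finite A" "finite B"
  shows "int (card A) - int (card B) = int (card (A - B)) - int (card (B - A))"
  using card_Int_Diff[OF assms(1), of B] card_Int_Diff[OF assms(2), of A]
  by (simp add: Int_commute)

definition better_off :: "('s \<Rightarrow> ('p \<times> 'p) set) \<Rightarrow> ('s \<times> 'p) set \<Rightarrow> ('s \<times> 'p) set \<Rightarrow> 's \<Rightarrow> bool" where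
  "better_off SP M M' x \<longleftrightarrow> assigned M x \<and> (\<not> assigned M' x \<or> student_prefers SP x M M')"

definition arrivals :: "('s \<Rightarrow> ('p \<times> 'p) set) \<Rightarrow> ('s \<times> 'p) set \<Rightarrow> ('s \<times> 'p) set \<Rightarrow> 'p \<Rightarrow> 's set" where
  "arrivals SP M M' q = {x \<in> Mproj M q - Mproj M' q. better_off SP M M' x}"

definition departures :: "('s \<Rightarrow> ('p \<times> 'p) set) \<Rightarrow> ('s \<times> 'p) set \<Rightarrow> ('s \<times> 'p) set \<Rightarrow> 'p \<Rightarrow> 's set" where
  "departures SP M M' q = {y \<in> Mproj M' q - Mproj M q. student_prefers SP y M M'}"

definition balance :: "('s \<Rightarrow> ('p \<times> 'p) set) \<Rightarrow> ('s \<times> 'p) set \<Rightarrow> ('s \<times> 'p) set \<Rightarrow> 'p \<Rightarrow> int" where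
  "balance SP M M' q = int (card (arrivals SP M M' q)) - int (card (departures SP M M' q))"

locale spa =
  fixes S :: "'s set" and P :: "'p set" and L :: "'l set"
    and A :: "'s \<Rightarrow> 'p set" and SP :: "'s \<Rightarrow> ('p \<times> 'p) set" and lec :: "'p \<Rightarrow> 'l"
    and LP :: "'l \<Rightarrow> ('s \<times> 's) set" and cp :: "'p \<Rightarrow> nat" and dl :: "'l \<Rightarrow> nat"
  assumes inst: "spa_instance S P L A SP lec LP cp dl"
begin

abbreviation matching :: "('s \<times> 'p) set \<Rightarrow> bool" where
  "matching M \<equiv> is_matching S A lec cp dl M"

abbreviation stable :: "('s \<times> 'p) set \<Rightarrow> bool" where
  "stable M \<equiv> spa_stable S A SP lec LP cp dl M"

lemma
  shows finite_students: "finite S" and finite_projects: "finite P"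
    and finite_lecturers: "finite L"
  using inst by (simp_all add: spa_instance_def)

lemma student_order: "x \<in> S \<Longrightarrow> strict_linear_order_on (A x) (SP x)"
  using inst by (simp add: spa_instance_def)

lemma acceptable_projects: "x \<in> S \<Longrightarrow> A x \<subseteq> P"
  using inst by (simp add: spa_instance_def)

lemma lec_mem: "q \<in> P \<Longrightarrow> lec q \<in> L"
  using inst by (simp add: spa_instance_def)

lemma lecturer_order: "k \<in> L \<Longrightarrow> strict_linear_order_on (lec_list S A lec k) (LP k)"
  using inst by (simp add: spa_instance_def)

lemma stable_matching: "stable M \<Longrightarrow> matching M"
  by (simp add: spa_stable_def)

lemma stable_not_blocking: "stable M \<Longrightarrow> \<not> blocking_pair S A SP lec LP cp dl M x q"
  by (simp add: spa_stable_def)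

lemma matching_memD:
  assumes "matching M" "(x, q) \<in> M"
  shows "x \<in> S" "q \<in> A x" "q \<in> P" "x \<in> lec_list S A lec (lec q)" "lec q \<in> L"
proof -
  have "acceptable_pair S A lec x q" using assms unfolding is_matching_def by auto
  then show "x \<in> S" "q \<in> A x" "x \<in> lec_list S A lec (lec q)"
    unfolding acceptable_pair_def by auto
  then show "q \<in> P" using acceptable_projects by auto
  then show "lec q \<in> L" using lec_mem by auto
qed

lemma matching_unique: "matching M \<Longrightarrow> (x, q) \<in> M \<Longrightarrow> (x, r) \<in> M \<Longrightarrow> q = r"
  unfolding is_matching_def by blast

lemma card_Mproj_le: "matching M \<Longrightarrow> card (Mproj M q) \<le> cp q"
  unfolding is_matching_def by auto

lemma card_Mlec_le: "matching M \<Longrightarrow> card (Mlec M lec k) \<le> dl k"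
  unfolding is_matching_def by auto

lemma Mproj_subset_lec_list: "matching M \<Longrightarrow> Mproj M q \<subseteq> lec_list S A lec (lec q)"
  using matching_memD unfolding Mproj_def by auto

lemma Mlec_subset_lec_list: "matching M \<Longrightarrow> Mlec M lec k \<subseteq> lec_list S A lec k"
  using matching_memD unfolding Mlec_def by fastforce

lemma finite_Mproj: "matching M \<Longrightarrow> finite (Mproj M q)"
  by (rule finite_subset[OF _ finite_students]) (auto simp: Mproj_def dest: matching_memD(1))

lemma finite_Mlec: "matching M \<Longrightarrow> finite (Mlec M lec k)"
  by (rule finite_subset[OF _ finite_students]) (auto simp: Mlec_def dest: matching_memD(1))

lemma Mlec_memI: "(x, q) \<in> M \<Longrightarrow> x \<in> Mlec M lec (lec q)"
  by (auto simp: Mlec_def)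

lemma finite_offers: "finite (offers P lec k)"
  using finite_projects by (simp add: offers_def)

lemma card_Mlec_eq_sum:
  assumes M: "matching M"
  shows "card (Mlec M lec k) = (\<Sum>q\<in>offers P lec k. card (Mproj M q))"
proof -
  have "Mlec M lec k = (\<Union>q\<in>offers P lec k. Mproj M q)"
    using matching_memD(3)[OF M] by (auto simp: Mlec_def Mproj_def offers_def)
  moreover have "card (\<Union>q\<in>offers P lec k. Mproj M q) = (\<Sum>q\<in>offers P lec k. card (Mproj M q))"
    by (rule card_UN_disjoint[OF finite_offers])
      (use finite_Mproj[OF M] matching_unique[OF M] in \<open>auto simp: Mproj_def\<close>)
  ultimately show ?thesis by simp
qed

lemma sum_projects_by_lecturer:
  "(\<Sum>q\<in>P. f q) = (\<Sum>k\<in>L. \<Sum>q\<in>offers P lec k. f q)"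
proof -
  have "P = (\<Union>k\<in>L. offers P lec k)" using lec_mem by (auto simp: offers_def)
  then have "(\<Sum>q\<in>P. f q) = (\<Sum>q\<in>(\<Union>k\<in>L. offers P lec k). f q)" by simp
  also have "\<dots> = (\<Sum>k\<in>L. \<Sum>q\<in>offers P lec k. f q)"
    by (rule sum.UNION_disjoint[OF finite_lecturers]) (use finite_offers in \<open>auto simp: offers_def\<close>)
  finally show ?thesis .
qed

lemma better_off_prefers:
  assumes M: "matching M" and "better_off SP M M' x" "(x, q) \<in> M"
  shows "\<not> assigned M' x \<or> (\<exists>r. (x, r) \<in> M' \<and> (q, r) \<in> SP x)"
  using assms matching_unique[OF M _ \<open>(x, q) \<in> M\<close>]
  unfolding better_off_def student_prefers_def by metis

lemma arrival_outranked:
  assumes M: "matching M" and M': "stable M'" and x: "x \<in> arrivals SP M M' q"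
  shows "(card (Mproj M' q) = cp q \<and> (\<forall>y\<in>Mproj M' q. (y, x) \<in> LP (lec q))) \<or>
         (card (Mlec M' lec (lec q)) = dl (lec q) \<and> x \<notin> Mlec M' lec (lec q) \<and>
          (\<forall>y\<in>Mlec M' lec (lec q). (y, x) \<in> LP (lec q)))"
proof -
  have xq: "(x, q) \<in> M" "(x, q) \<notin> M'" "better_off SP M M' x"
    using x by (auto simp: arrivals_def Mproj_def)
  have M'm: "matching M'" using M' by (rule stable_matching)
  have "acceptable_pair S A lec x q" using M xq(1) unfolding is_matching_def by auto
  then have no_case:
    "\<not> (card (Mproj M' q) < cp q \<and> card (Mlec M' lec (lec q)) < dl (lec q))"
    "\<not> (card (Mproj M' q) < cp q \<and> card (Mlec M' lec (lec q)) = dl (lec q)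
         \<and> x \<in> Mlec M' lec (lec q))"
    "\<not> (card (Mproj M' q) < cp q \<and> card (Mlec M' lec (lec q)) = dl (lec q)
         \<and> prefers_to_worst (LP (lec q)) x (Mlec M' lec (lec q)))"
    "\<not> (card (Mproj M' q) = cp q \<and> prefers_to_worst (LP (lec q)) x (Mproj M' q))"
    using stable_not_blocking[OF M', of x q] xq(2) better_off_prefers[OF M xq(3,1)]
    unfolding blocking_pair_def by blast+
  have ord: "strict_linear_order_on (lec_list S A lec (lec q)) (LP (lec q))"
    and xl: "x \<in> lec_list S A lec (lec q)"
    using lecturer_order matching_memD[OF M xq(1)] by auto
  show ?thesis
  proof (cases "card (Mproj M' q) = cp q")
    case True
    have "x \<notin> Mproj M' q" using xq(2) by (simp add: Mproj_def)
    then show ?thesis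
      using True no_case(4) xl outranked_if_not_prefers_to_worst[OF ord finite_Mproj[OF M'm]
          Mproj_subset_lec_list[OF M'm]] by blast
  next
    case False
    then have "card (Mproj M' q) < cp q" using card_Mproj_le[OF M'm, of q] by linarith
    moreover have "card (Mlec M' lec (lec q)) \<le> dl (lec q)" using card_Mlec_le[OF M'm] .
    ultimately show ?thesis
      using no_case(1-3) xl outranked_if_not_prefers_to_worst[OF ord finite_Mlec[OF M'm]
          Mlec_subset_lec_list[OF M'm]] by force
  qed
qed

lemma prefers_if_outranks_occupant:
  assumes M: "stable M" and M': "matching M'"
    and y: "(y, q) \<in> M'" "(y, q) \<notin> M" and x: "(x, q) \<in> M" and yx: "(y, x) \<in> LP (lec q)"
  shows "student_prefers SP y M M'"
proof (rule ccontr)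
  assume not_pref: "\<not> student_prefers SP y M M'"
  have Mm: "matching M" using M by (rule stable_matching)
  have yS: "y \<in> S" and qA: "q \<in> A y" using matching_memD[OF M' y(1)] by auto
  have worse: "\<not> assigned M y \<or> (\<exists>r. (y, r) \<in> M \<and> (q, r) \<in> SP y)"
  proof (cases "assigned M y")
    case True
    then obtain r where r: "(y, r) \<in> M" by (auto simp: assigned_def)
    have "r \<noteq> q" "r \<in> A y" using r y(2) matching_memD[OF Mm r] by auto
    moreover have "(r, q) \<notin> SP y" using not_pref r y(1) by (auto simp: student_prefers_def)
    ultimately show ?thesis
      using r strict_linear_order_on_total[OF student_order[OF yS] qA] by blast
  qed auto
  have ord: "strict_linear_order_on (lec_list S A lec (lec q)) (LP (lec q))"
    using lecturer_order matching_memD[OF Mm x] by auto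
  have "x \<in> Mproj M q" "x \<in> Mlec M lec (lec q)"
    using x Mlec_memI by (auto simp: Mproj_def)
  then have "prefers_to_worst (LP (lec q)) y (Mproj M q)"
    "prefers_to_worst (LP (lec q)) y (Mlec M lec (lec q))"
    using yx prefers_to_worst_iff[OF ord finite_Mproj[OF Mm] Mproj_subset_lec_list[OF Mm]]
      prefers_to_worst_iff[OF ord finite_Mlec[OF Mm] Mlec_subset_lec_list[OF Mm]] by blast+
  moreover have "acceptable_pair S A lec y q" using M' y(1) unfolding is_matching_def by auto
  moreover have "card (Mproj M q) \<le> cp q" "card (Mlec M lec (lec q)) \<le> dl (lec q)"
    using card_Mproj_le[OF Mm] card_Mlec_le[OF Mm] by auto
  ultimately have "blocking_pair S A SP lec LP cp dl M y q"
    using y(2) worse unfolding blocking_pair_def by force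
  then show False using stable_not_blocking[OF M] by blast
qed

lemma card_arrivals_le_departures:
  assumes M: "stable M" and M': "matching M'" and x: "x \<in> arrivals SP M M' q"
    and full: "card (Mproj M' q) = cp q" and outranked: "\<forall>y\<in>Mproj M' q. (y, x) \<in> LP (lec q)"
  shows "card (arrivals SP M M' q) \<le> card (departures SP M M' q)"
proof -
  have Mm: "matching M" using M by (rule stable_matching)
  have fin: "finite (Mproj M q)" "finite (Mproj M' q)"
    using finite_Mproj Mm M' by auto
  have "(x, q) \<in> M" using x by (auto simp: arrivals_def Mproj_def)
  then have "Mproj M' q - Mproj M q \<subseteq> departures SP M M' q"
    using prefers_if_outranks_occupant[OF M M'] outranked
    by (auto simp: departures_def Mproj_def)
  then have "card (Mproj M' q - Mproj M q) \<le> card (departures SP M M' q)"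
    using fin by (intro card_mono) (auto simp: departures_def)
  moreover have "card (Mproj M q - Mproj M' q) \<le> card (Mproj M' q - Mproj M q)"
    using card_le_sym_Diff[OF fin] card_Mproj_le[OF Mm, of q] full by simp
  moreover have "card (arrivals SP M M' q) \<le> card (Mproj M q - Mproj M' q)"
    using fin by (intro card_mono) (auto simp: arrivals_def)
  ultimately show ?thesis by linarith
qed

lemma lecturer_full_if_balance_pos:
  assumes M: "stable M" and M': "stable M'" and pos: "0 < balance SP M M' q"
  shows "card (Mlec M' lec (lec q)) = dl (lec q) \<and>
    (\<exists>x\<in>Mlec M lec (lec q). \<forall>y\<in>Mlec M' lec (lec q). (y, x) \<in> LP (lec q))"
proof -
  have lt: "card (departures SP M M' q) < card (arrivals SP M M' q)"
    using pos by (simp add: balance_def)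
  then obtain x where x: "x \<in> arrivals SP M M' q" by fastforce
  then have "x \<in> Mlec M lec (lec q)"
    using Mlec_memI by (auto simp: arrivals_def Mproj_def)
  moreover have "\<not> (card (Mproj M' q) = cp q \<and> (\<forall>y\<in>Mproj M' q. (y, x) \<in> LP (lec q)))"
    using card_arrivals_le_departures[OF M stable_matching[OF M'] x] lt by fastforce
  ultimately show ?thesis using arrival_outranked[OF stable_matching[OF M] M' x] by blast
qed

lemma arrivals_Un_departures:
  assumes M: "matching M" and M': "matching M'"
  shows "Mproj M q - Mproj M' q = arrivals SP M M' q \<union> departures SP M' M q"
proof -
  have "x \<in> arrivals SP M M' q \<union> departures SP M' M q" if x: "x \<in> Mproj M q - Mproj M' q" for x
  proof (cases "assigned M' x")
    case True
    then obtain r where r: "(x, r) \<in> M'" by (auto simp: assigned_def)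
    have xq: "(x, q) \<in> M" "r \<noteq> q" using x r by (auto simp: Mproj_def)
    have "(q, r) \<in> SP x \<or> (r, q) \<in> SP x"
      using xq r matching_memD[OF M xq(1)] matching_memD[OF M' r]
        strict_linear_order_on_total[OF student_order] by metis
    then show ?thesis using x xq r
      by (auto simp: arrivals_def departures_def better_off_def assigned_def student_prefers_def)
  qed (use x in \<open>auto simp: arrivals_def better_off_def assigned_def Mproj_def\<close>)
  then show ?thesis by (auto simp: arrivals_def departures_def)
qed

lemma arrivals_departures_disjoint:
  assumes M: "matching M" and M': "matching M'"
  shows "arrivals SP M M' q \<inter> departures SP M' M q = {}"
proof (rule ccontr)
  assume "arrivals SP M M' q \<inter> departures SP M' M q \<noteq> {}"
  then obtain x where "better_off SP M M' x" "student_prefers SP x M' M"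
    by (auto simp: arrivals_def departures_def)
  then obtain a b c d where ab: "(x, a) \<in> M'" "(x, b) \<in> M" "(a, b) \<in> SP x"
    and cd: "(x, c) \<in> M" "(x, d) \<in> M'" "(c, d) \<in> SP x"
    by (auto simp: better_off_def assigned_def student_prefers_def)
  have "c = b" "d = a" using ab cd matching_unique M M' by metis+
  then show False
    using ab cd strict_linear_order_on_asym[OF student_order[OF matching_memD(1)[OF M ab(2)]]]
    by blast
qed

lemma card_Mproj_Diff:
  assumes M: "matching M" and M': "matching M'"
  shows "card (Mproj M q - Mproj M' q) = card (arrivals SP M M' q) + card (departures SP M' M q)"
proof -
  have "finite (arrivals SP M M' q)" "finite (departures SP M' M q)"
    using finite_Mproj[OF M] by (auto simp: arrivals_def departures_def)
  then show ?thesis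
    using arrivals_Un_departures[OF M M'] arrivals_departures_disjoint[OF M M']
    by (simp add: card_Un_disjoint)
qed

lemma int_card_Mproj_diff_eq:
  assumes M: "matching M" and M': "matching M'"
  shows "int (card (Mproj M q)) - int (card (Mproj M' q)) = balance SP M M' q - balance SP M' M q"
  using int_card_diff_eq[OF finite_Mproj[OF M] finite_Mproj[OF M']]
    card_Mproj_Diff[OF M M'] card_Mproj_Diff[OF M' M]
  by (simp add: balance_def)

lemma sum_balance_lecturer_le_0:
  assumes M: "stable M" and M': "stable M'"
  shows "(\<Sum>q\<in>offers P lec k. balance SP M M' q) \<le> 0"
proof (cases "\<exists>q\<in>offers P lec k. 0 < balance SP M M' q")
  case True
  then obtain q0 where q0: "q0 \<in> offers P lec k" "0 < balance SP M M' q0" by blast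
  then have k: "lec q0 = k" "k \<in> L" using lec_mem by (auto simp: offers_def)
  obtain x where full: "card (Mlec M' lec k) = dl k" and x: "x \<in> Mlec M lec k"
    and x_last: "\<forall>y\<in>Mlec M' lec k. (y, x) \<in> LP k"
    using lecturer_full_if_balance_pos[OF M M' q0(2)] k by auto
  have "balance SP M' M r \<le> 0" if r: "r \<in> offers P lec k" for r
  proof (rule ccontr)
    assume "\<not> balance SP M' M r \<le> 0"
    then obtain y where "y \<in> Mlec M' lec k" "\<forall>z\<in>Mlec M lec k. (z, y) \<in> LP k"
      using lecturer_full_if_balance_pos[OF M' M] r by (force simp: offers_def)
    then show False
      using x x_last strict_linear_order_on_asym[OF lecturer_order[OF k(2)]] by blast
  qed
  then have "(\<Sum>q\<in>offers P lec k. balance SP M' M q) \<le> 0" by (rule sum_nonpos)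
  moreover have "(\<Sum>q\<in>offers P lec k. balance SP M M' q) =
      (\<Sum>q\<in>offers P lec k. balance SP M' M q) +
      (\<Sum>q\<in>offers P lec k. int (card (Mproj M q)) - int (card (Mproj M' q)))"
    using int_card_Mproj_diff_eq[OF stable_matching[OF M] stable_matching[OF M']]
    by (simp add: sum.distrib[symmetric])
  moreover have "(\<Sum>q\<in>offers P lec k. int (card (Mproj M q)) - int (card (Mproj M' q))) =
      int (card (Mlec M lec k)) - int (card (Mlec M' lec k))"
    using stable_matching[OF M] stable_matching[OF M']
    by (simp add: card_Mlec_eq_sum sum_subtractf)
  moreover have "card (Mlec M lec k) \<le> card (Mlec M' lec k)"
    using full card_Mlec_le[OF stable_matching[OF M]] by simp
  ultimately show ?thesis by linarith
qed (auto intro: sum_nonpos simp: not_less)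

lemma departure_is_arrival:
  assumes M: "matching M" and M': "matching M'" and y: "y \<in> departures SP M M' q"
  shows "\<exists>r\<in>P. y \<in> arrivals SP M M' r"
proof -
  obtain a b where ab: "(y, a) \<in> M" "(y, b) \<in> M'" "(a, b) \<in> SP y"
    using y by (auto simp: departures_def student_prefers_def)
  have "a \<noteq> b"
    using ab(3) strict_linear_order_on_asym[OF student_order[OF matching_memD(1)[OF M ab(1)]]]
    by blast
  then have "(y, a) \<notin> M'" using ab(2) matching_unique[OF M'] by metis
  then have "y \<in> arrivals SP M M' a"
    using ab y by (auto simp: arrivals_def departures_def Mproj_def better_off_def assigned_def)
  then show ?thesis using matching_memD(3)[OF M ab(1)] by blast
qed

lemma sum_balance_nonneg:
  assumes M: "matching M" and M': "matching M'"
  shows "0 \<le> (\<Sum>q\<in>P. balance SP M M' q)"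
proof -
  have fin: "finite (arrivals SP M M' q)" "finite (departures SP M M' q)" for q
    using finite_Mproj[OF M] finite_Mproj[OF M'] by (auto simp: arrivals_def departures_def)
  have "(\<Sum>q\<in>P. card (departures SP M M' q)) = card (\<Union>q\<in>P. departures SP M M' q)"
    by (rule card_UN_disjoint[symmetric, OF finite_projects])
      (use fin matching_unique[OF M'] in \<open>auto simp: departures_def Mproj_def\<close>)
  also have "\<dots> \<le> card (\<Union>q\<in>P. arrivals SP M M' q)"
  proof (rule card_mono)
    show "finite (\<Union>q\<in>P. arrivals SP M M' q)" using fin finite_projects by blast
    show "(\<Union>q\<in>P. departures SP M M' q) \<subseteq> (\<Union>q\<in>P. arrivals SP M M' q)"
      using departure_is_arrival[OF M M'] by blast
  qed
  also have "\<dots> = (\<Sum>q\<in>P. card (arrivals SP M M' q))"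
    by (rule card_UN_disjoint[OF finite_projects])
      (use fin matching_unique[OF M] in \<open>auto simp: arrivals_def Mproj_def\<close>)
  finally show ?thesis
    by (simp add: balance_def sum_subtractf flip: of_nat_sum)
qed

lemma sum_balance_lecturer_eq_0:
  assumes M: "stable M" and M': "stable M'" and l: "l \<in> L"
  shows "(\<Sum>q\<in>offers P lec l. balance SP M M' q) = 0"
proof -
  have "(\<Sum>q\<in>P. balance SP M M' q) =
      (\<Sum>q\<in>offers P lec l. balance SP M M' q) + (\<Sum>k\<in>L - {l}. \<Sum>q\<in>offers P lec k. balance SP M M' q)"
    using l finite_lecturers by (simp add: sum_projects_by_lecturer sum.remove)
  moreover have "(\<Sum>k\<in>L - {l}. \<Sum>q\<in>offers P lec k. balance SP M M' q) \<le> 0"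
    using sum_balance_lecturer_le_0[OF M M'] by (simp add: sum_nonpos)
  ultimately show ?thesis
    using sum_balance_nonneg[OF stable_matching[OF M] stable_matching[OF M']]
      sum_balance_lecturer_le_0[OF M M', of l] by linarith
qed

(* A would-be counterexample: l ranks every student it loses from M to M' above the arrival s. *)

context
  fixes M M' s p l
  assumes M: "stable M" and M': "stable M'"
    and s: "s \<in> arrivals SP M M' p" "lec p = l" "s \<in> Mlec M' lec l"
    and outranks: "\<forall>z\<in>Mlec M lec l - Mlec M' lec l. (z, s) \<in> LP l"
begin

lemma lecturer_mem: "l \<in> L"
  using s matching_memD(5)[OF stable_matching[OF M]] by (auto simp: arrivals_def Mproj_def)

lemma arrival_outranked_at_project:
  assumes x: "x \<in> arrivals SP M M' q" and q: "lec q = l"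
  shows "card (Mproj M' q) = cp q \<and> (\<forall>y\<in>Mproj M' q. (y, x) \<in> LP l)"
proof -
  have "x \<in> Mlec M lec l" using x q Mlec_memI by (force simp: arrivals_def Mproj_def)
  then have "x \<notin> Mlec M' lec l \<Longrightarrow> (s, x) \<notin> LP l"
    using outranks strict_linear_order_on_asym[OF lecturer_order[OF lecturer_mem]] by blast
  then show ?thesis
    using arrival_outranked[OF stable_matching[OF M] M' x] q s(3) by blast
qed

lemma balance_eq_0:
  assumes q: "q \<in> offers P lec l"
  shows "balance SP M M' q = 0"
proof -
  have nonpos: "0 \<le> - balance SP M M' r" if r: "r \<in> offers P lec l" for r
  proof (cases "arrivals SP M M' r = {}")
    case False
    then obtain x where "x \<in> arrivals SP M M' r" by blast
    then show ?thesis
      using r arrival_outranked_at_project card_arrivals_le_departures[OF M stable_matching[OF M']]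
      by (fastforce simp: balance_def offers_def)
  qed (simp add: balance_def)
  have "(\<Sum>r\<in>offers P lec l. - balance SP M M' r) = 0"
    using sum_balance_lecturer_eq_0[OF M M' lecturer_mem] by (simp add: sum_negf)
  then show ?thesis
    using q by (subst (asm) sum_nonneg_eq_0_iff) (use finite_offers nonpos in auto)
qed

lemma arrival_outranks_arrival:
  assumes m: "m \<in> arrivals SP M M' q0" "lec q0 = l"
  shows "\<exists>x\<in>(\<Union>q\<in>offers P lec l. arrivals SP M M' q). (m, x) \<in> LP l"
proof (cases "m \<in> Mlec M' lec l")
  case False
  have "m \<in> Mlec M lec l" using m Mlec_memI by (force simp: arrivals_def Mproj_def)
  then have "(m, s) \<in> LP l" using False outranks by blast
  moreover have "p \<in> offers P lec l"
    using s matching_memD(3)[OF stable_matching[OF M]] by (auto simp: arrivals_def Mproj_def offers_def)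
  ultimately show ?thesis using s(1) by blast
next
  case True
  then obtain q1 where q1: "(m, q1) \<in> M'" "lec q1 = l" by (auto simp: Mlec_def)
  have m_q0: "(m, q0) \<in> M" "(m, q0) \<notin> M'" "better_off SP M M' m"
    using m by (auto simp: arrivals_def Mproj_def)
  have "(m, q1) \<notin> M" using q1 m_q0 matching_unique[OF stable_matching[OF M]] by metis
  then have "m \<in> departures SP M M' q1"
    using q1 m_q0 by (auto simp: departures_def better_off_def assigned_def Mproj_def)
  moreover have q1_offered: "q1 \<in> offers P lec l"
    using matching_memD(3)[OF stable_matching[OF M'] q1(1)] q1(2) by (simp add: offers_def)
  moreover have "finite (departures SP M M' q1)"
    using finite_Mproj[OF stable_matching[OF M']] by (simp add: departures_def)
  ultimately have "card (arrivals SP M M' q1) > 0"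
    using balance_eq_0 by (fastforce simp: balance_def card_gt_0_iff)
  then obtain x where x: "x \<in> arrivals SP M M' q1" by (auto simp: card_gt_0_iff)
  then have "(m, x) \<in> LP l"
    using arrival_outranked_at_project q1 by (auto simp: Mproj_def)
  then show ?thesis using x q1_offered by blast
qed

end

theorem lecturer_prefers_displaced_student:
  assumes M: "stable M" and M': "stable M'"
    and s: "s \<in> arrivals SP M M' p" "s \<in> Mlec M' lec (lec p)"
  shows "\<exists>z\<in>Mlec M lec (lec p) - Mlec M' lec (lec p). (s, z) \<in> LP (lec p)"
proof (rule ccontr)
  let ?l = "lec p"
  let ?X = "\<Union>q\<in>offers P lec ?l. arrivals SP M M' q"
  have s_p: "(s, p) \<in> M" using s by (auto simp: arrivals_def Mproj_def)
  have ord: "strict_linear_order_on (lec_list S A lec ?l) (LP ?l)"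
    and sl: "s \<in> lec_list S A lec ?l"
    using lecturer_order matching_memD[OF stable_matching[OF M] s_p] by auto
  assume "\<not> ?thesis"
  then have outranks: "\<forall>z\<in>Mlec M lec ?l - Mlec M' lec ?l. (z, s) \<in> LP ?l"
    using Mlec_subset_lec_list[OF stable_matching[OF M]] s(2) sl
      strict_linear_order_on_total[OF ord] by blast
  have "finite ?X"
    using finite_offers finite_Mproj[OF stable_matching[OF M]] by (auto simp: arrivals_def)
  moreover have "?X \<subseteq> lec_list S A lec ?l"
    using Mproj_subset_lec_list[OF stable_matching[OF M]] by (force simp: arrivals_def offers_def)
  moreover have "s \<in> ?X" using s_p s(1) matching_memD(3)[OF stable_matching[OF M]]
    by (auto simp: offers_def)
  ultimately obtain m where m: "m \<in> ?X" and m_last: "\<And>y. y \<in> ?X \<Longrightarrow> y \<noteq> m \<Longrightarrow> (y, m) \<in> LP ?l"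
    using strict_linear_order_on_worst[OF ord] by blast
  from m obtain q0 where "q0 \<in> offers P lec ?l" "m \<in> arrivals SP M M' q0" by blast
  then obtain x where "x \<in> ?X" "(m, x) \<in> LP ?l"
    using arrival_outranks_arrival[OF M M' s(1) refl s(2) outranks, of m q0]
    by (auto simp: offers_def)
  then show False using m_last strict_linear_order_on_asym[OF ord] by metis
qed

end

theorem lemma4:
  assumes inst: "spa_instance S P L A SP lec LP cp dl"
    and stM: "spa_stable S A SP lec LP cp dl M"
    and stM': "spa_stable S A SP lec LP cp dl M'"
    and sp: "(s, p) \<in> M" and sp': "(s, p') \<in> M'"
    and diff: "p \<noteq> p'"
    and lp: "lec p = l" and lp': "lec p' = l"
    and pref: "student_prefers SP s M M'"
  shows "\<exists>z \<in> Mlec M lec l - Mlec M' lec l. (s, z) \<in> LP l"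
proof -
  interpret spa S P L A SP lec LP cp dl by (rule spa.intro[OF inst])
  have "(s, p) \<notin> M'" using sp' diff matching_unique[OF stable_matching[OF stM']] by metis
  then have arrival: "s \<in> arrivals SP M M' p"
    using sp pref by (auto simp: arrivals_def Mproj_def better_off_def assigned_def)
  have "s \<in> Mlec M' lec (lec p)" using sp' lp lp' by (auto simp: Mlec_def)
  from lecturer_prefers_displaced_student[OF stM stM' arrival this] show ?thesis
    unfolding lp .
qed

end
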